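(* Let $A_1,\dots,A_N\in\mathbb{R}^{2\times2}$ with $\det[A_j,A_k]=0$ for all $j\ne k$, and assume $A_1$ has non-real eigenvalues. Then there exists $S\in GL(2,\mathbb{R})$ such that $$S^{-1}A_jS=\begin{pmatrix}s_j&-t_j\\t_j&s_j\end{pmatrix},\qquad j=1,\dots,N,$$ for some $s_j,t_j\in\mathbb{R}$.
   Context: $[A,B]=AB-BA$. *)

theory Defs
  imports "HOL-Analysis.Analysis"
begin

definition commutator :: "'a::comm_ring_1^'n^'n \<Rightarrow> 'a^'n^'n \<Rightarrow> 'a^'n^'n" where
  "commutator A B = A ** B - B ** A"

definition cmat :: "real^'n^'m \<Rightarrow> complex^'n^'m" where
  "cmat A = (\<chi> i j. complex_of_real (A $ i $ j))"

definition complex_eigenvalue :: "real^'n^'n \<Rightarrow> complex \<Rightarrow> bool" where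
  "complex_eigenvalue A z \<longleftrightarrow> det (cmat A - mat z) = 0"

end

theory Submission
  imports Defs
begin

text \<open>A real 2x2 matrix with a non-real eigenvalue x + iy is similar to the rotation-scaling
  matrix with entries x and y. Conjugation preserves determinants of commutators, and a matrix B
  satisfies det [M, B] = 0 for such an M exactly when -y^2 times a sum of two squares vanishes,
  which forces B to be a rotation-scaling matrix as well.\<close>

lemma
  fixes A :: "'a::semiring_1^'n^'n"
  assumes "invertible A"
  shows matrix_inv_right: "A ** matrix_inv A = mat 1"
    and matrix_inv_left: "matrix_inv A ** A = mat 1"
  using someI_ex[OF assms[unfolded invertible_def]] unfolding matrix_inv_def by auto

lemma matrix_diff_ldistrib: "(A :: 'a::ring_1^'n^'m) ** (B - C) = A ** B - A ** C"
  by (simp add: vec_eq_iff matrix_matrix_mult_def sum_subtractf algebra_simps)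

lemma matrix_diff_rdistrib: "((B :: 'a::ring_1^'n^'m) - C) ** A = B ** A - C ** A"
  by (simp add: vec_eq_iff matrix_matrix_mult_def sum_subtractf algebra_simps)

lemma matrix_similar_mult:
  fixes S :: "'a::semiring_1^'n^'n"
  assumes "invertible S"
  shows "(matrix_inv S ** A ** S) ** (matrix_inv S ** B ** S) = matrix_inv S ** (A ** B) ** S"
  by (metis matrix_inv_right[OF assms] matrix_mul_assoc matrix_mul_rid)

lemma commutator_similar:
  fixes S :: "'a::comm_ring_1^'n^'n"
  assumes "invertible S"
  shows "commutator (matrix_inv S ** A ** S) (matrix_inv S ** B ** S)
           = matrix_inv S ** commutator A B ** S"
  unfolding commutator_def matrix_similar_mult[OF assms]
  by (simp add: matrix_diff_ldistrib matrix_diff_rdistrib)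

lemma det_similar:
  fixes S :: "'a::comm_ring_1^'n^'n"
  assumes "invertible S"
  shows "det (matrix_inv S ** A ** S) = det A"
proof -
  have "det (matrix_inv S) * det S = 1"
    by (metis det_I det_mul matrix_inv_left[OF assms])
  then show ?thesis
    by (simp add: det_mul algebra_simps)
qed

definition rot_scale :: "'a::comm_ring_1 \<Rightarrow> 'a \<Rightarrow> 'a^2^2" where
  "rot_scale s t = (\<chi> i k. if i = k then s else if i = 1 then - t else t)"

lemma rot_scale_nth [simp]:
  "rot_scale s t $ 1 $ 1 = s" "rot_scale s t $ 1 $ 2 = - t"
  "rot_scale s t $ 2 $ 1 = t" "rot_scale s t $ 2 $ 2 = s"
  by (simp_all add: rot_scale_def)

lemma matrix_mult_nth_2: "((P :: 'a::comm_ring_1^2^2) ** Q) $ i $ j = P$i$1 * Q$1$j + P$i$2 * Q$2$j"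
  by (simp add: matrix_matrix_mult_def sum_2)

lemma matrix_eq_iff_2:
  "(P :: 'a^2^2) = Q \<longleftrightarrow> P$1$1 = Q$1$1 \<and> P$1$2 = Q$1$2 \<and> P$2$1 = Q$2$1 \<and> P$2$2 = Q$2$2"
  by (auto simp: vec_eq_iff forall_2)

lemma det_commutator_rot_scale:
  "det (commutator (rot_scale s t) B)
     = - t\<^sup>2 * ((B$1$2 + B$2$1)\<^sup>2 + (B$1$1 - B$2$2)\<^sup>2)"
  unfolding commutator_def det_2
  by (simp add: matrix_mult_nth_2 algebra_simps power2_eq_square)

lemma det_commutator_rot_scale_eq_0_imp:
  fixes B :: "real^2^2"
  assumes "t \<noteq> 0" and "det (commutator (rot_scale s t) B) = 0"
  shows "B = rot_scale (B$1$1) (B$2$1)"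
proof -
  have "(B$1$2 + B$2$1)\<^sup>2 + (B$1$1 - B$2$2)\<^sup>2 = 0"
    using assms by (simp add: det_commutator_rot_scale)
  then have "B$1$2 + B$2$1 = 0" "B$1$1 - B$2$2 = 0"
    by (simp_all add: sum_power2_eq_zero_iff)
  then show ?thesis
    by (simp add: matrix_eq_iff_2)
qed

lemma complex_eigenvalue_2:
  "complex_eigenvalue (A :: real^2^2) z \<longleftrightarrow>
     (complex_of_real (A$1$1) - z) * (complex_of_real (A$2$2) - z)
       - complex_of_real (A$1$2) * complex_of_real (A$2$1) = 0"
  by (simp add: complex_eigenvalue_def det_2 cmat_def mat_def)

lemma nonreal_eigenvalue_trace_det:
  fixes A :: "real^2^2"
  assumes "complex_eigenvalue A (Complex x y)" and "y \<noteq> 0"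
  shows "A$2$2 = 2 * x - A$1$1"
    and "A$1$2 * A$2$1 = - (A$1$1 - x)\<^sup>2 - y\<^sup>2"
proof -
  have re: "(A$1$1 - x) * (A$2$2 - x) - y * y - A$1$2 * A$2$1 = 0"
    and im: "y * ((A$1$1 - x) + (A$2$2 - x)) = 0"
    using assms(1) unfolding complex_eigenvalue_2
    by (simp_all add: complex_eq_iff algebra_simps)
  from im assms(2) show tr: "A$2$2 = 2 * x - A$1$1"
    by simp
  from re show "A$1$2 * A$2$1 = - (A$1$1 - x)\<^sup>2 - y\<^sup>2"
    unfolding tr by (simp add: algebra_simps power2_eq_square)
qed

lemma similar_rot_scale_if_nonreal_eigenvalue:
  fixes A :: "real^2^2"
  assumes "complex_eigenvalue A z" and "Im z \<noteq> 0"
  shows "\<exists>S. invertible S \<and> matrix_inv S ** A ** S = rot_scale (Re z) (Im z)"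
proof -
  define x y where "x = Re z" and "y = Im z"
  define d c where "d = A$1$1 - x" and "c = A$2$1"
  have y0: "y \<noteq> 0"
    using assms(2) by (simp add: y_def)
  have eig: "complex_eigenvalue A (Complex x y)"
    using assms(1) by (simp add: x_def y_def)
  note tr = nonreal_eigenvalue_trace_det(1)[OF eig y0]
  have bc: "A$1$2 * c = - d\<^sup>2 - y\<^sup>2"
    using nonreal_eigenvalue_trace_det(2)[OF eig y0] by (simp add: c_def d_def)
  have c0: "c \<noteq> 0"
  proof
    assume "c = 0"
    with bc have "- d\<^sup>2 = y\<^sup>2"
      by simp
    moreover have "y\<^sup>2 > 0"
      using y0 by simp
    ultimately show False
      by (smt (verit) zero_le_power2)
  qed
  \<comment> \<open>Second column (A e1 - x e1)/y, so that A e1 = x e1 + y (S e2),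
    as the first column of A S = S (rot_scale x y) demands.\<close>
  define S :: "real^2^2" where
    "S = (\<chi> i j. if i = 1 then (if j = 1 then 1 else d / y) else (if j = 1 then 0 else c / y))"
  have S: "S$1$1 = 1" "S$1$2 = d / y" "S$2$1 = 0" "S$2$2 = c / y"
    by (simp_all add: S_def)
  have invS: "invertible S"
    unfolding invertible_det_nz det_2 S using c0 y0 by simp
  have "A ** S = S ** rot_scale x y"
    unfolding matrix_eq_iff_2 matrix_mult_nth_2 S rot_scale_nth tr
    using y0 bc by (simp add: c_def d_def field_simps power2_eq_square)
  then have "matrix_inv S ** A ** S = rot_scale x y"
    by (metis matrix_inv_left[OF invS] matrix_mul_assoc matrix_mul_lid)
  with invS show ?thesis
    by (auto simp: x_def y_def)
qed

theorem lemma2p8: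
  fixes N :: nat and A :: "nat \<Rightarrow> real^2^2"
  assumes "N \<ge> 1"
    and "\<forall>j\<in>{1..N}. \<forall>k\<in>{1..N}. j \<noteq> k \<longrightarrow> det (commutator (A j) (A k)) = 0"
    and "\<exists>z. complex_eigenvalue (A 1) z \<and> Im z \<noteq> 0"
  shows "\<exists>S :: real^2^2. invertible S \<and>
           (\<forall>j\<in>{1..N}. \<exists>s t :: real.
              matrix_inv S ** A j ** S = (\<chi> i k. if i = k then s else if i = 1 then - t else t))"
proof -
  obtain z where z: "complex_eigenvalue (A 1) z" "Im z \<noteq> 0"
    using assms(3) by blast
  then obtain S where S: "invertible S" "matrix_inv S ** A 1 ** S = rot_scale (Re z) (Im z)"
    using similar_rot_scale_if_nonreal_eigenvalue by blast
  have "\<exists>s t. matrix_inv S ** A j ** S = rot_scale s t" if j: "j \<in> {1..N}" for j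
  proof (cases "j = 1")
    case True
    with S(2) show ?thesis by blast
  next
    case False
    have "det (commutator (A 1) (A j)) = 0"
      using assms(1,2) j False by auto
    then have "det (commutator (rot_scale (Re z) (Im z)) (matrix_inv S ** A j ** S)) = 0"
      by (simp flip: S(2) add: commutator_similar[OF S(1)] det_similar[OF S(1)])
    then show ?thesis
      using det_commutator_rot_scale_eq_0_imp z(2) by blast
  qed
  with S(1) show ?thesis
    unfolding rot_scale_def by blast
qed

end
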